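(* There is an absolute constant $C>0$ such that for all $\eta_1,\eta_2,\varepsilon,\delta\in(0,1/2]$ with $\eta_2\le\eta_1$ there exists an algorithm (for the infinite-armed Bernoulli bandit described in the context, not knowing $\mu$) which uses at most $C\,\frac{\eta_1\log(1/\eta_2)\log(1/\delta)}{\eta_2^2\varepsilon^2}$ samples and outputs a number $\hat\alpha\in[0,1]$ such that for every reservoir distribution $\mu$, with probability at least $1-\frac{\delta}{2}$, \[ \hat\alpha\in\Big[G_\mu^{-1}(1-\eta_1)-\tfrac{\varepsilon}{3},\;G_\mu^{-1}(1-\eta_1+\eta_2)+\tfrac{\varepsilon}{3}\Big]. \]
   Context: Infinite-armed Bernoulli bandit: a reservoir distribution $\mu$ is any Borel probability measure on $[0,1]$. There are countably many arms $a_1,a_2,\dots$ whose means $p_1,p_2,\dots$ are drawn i.i.d. from $\mu$ (unknown to the algorithm). Each time arm $a_i$ is sampled it returns a reward in $\{0,1\}$ distributed as Bernoulli$(p_i)$, independently of all other rewards given the means. An algorithm adaptively chooses which arm to sample at each step based on past rewards (and possibly internal randomness). Probabilities are over the means, rewards and the algorithm's randomness. Write $G_\mu(\tau)=\mu([0,\tau])$ and $G_\mu^{-1}(p)=\inf\{\tau: G_\mu(\tau)\ge p\}$. *)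

theory Defs
  imports "HOL-Probability.Probability"
begin

text \<open>Arms are indexed by natural numbers (arm a_{i+1} has index i). A history is the list of
  (arm index, observed reward) pairs in the order they were obtained.\<close>
type_synonym history = "(nat \<times> bool) list"

text \<open>A (randomised, adaptive) algorithm: given the history so far it chooses, with
  internal randomness, either \<open>Inl i\<close> = sample arm i next, or \<open>Inr a\<close> = stop and output a.\<close>
type_synonym bandit_alg = "history \<Rightarrow> (nat + real) pmf"

text \<open>Distribution of the output of the algorithm when the arm means are \<open>p\<close>, running for at
  most \<open>n\<close> further steps from history \<open>h\<close> (fuel; on fuel exhaustion a sampling decision
  is replaced by output 0, which never happens for algorithms respecting the sample bound).\<close>
fun alg_output :: "bandit_alg \<Rightarrow> (nat \<Rightarrow> real) \<Rightarrow> nat \<Rightarrow> history \<Rightarrow> real pmf" where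
  "alg_output A p 0 h = map_pmf (\<lambda>x. case x of Inr a \<Rightarrow> a | Inl _ \<Rightarrow> 0) (A h)"
| "alg_output A p (Suc n) h = A h \<bind> (\<lambda>x. case x of
      Inr a \<Rightarrow> return_pmf a
    | Inl i \<Rightarrow> bernoulli_pmf (p i) \<bind> (\<lambda>r. alg_output A p n (h @ [(i, r)])))"

definition valid_alg :: "real \<Rightarrow> bandit_alg \<Rightarrow> bool" where
  "valid_alg B A \<longleftrightarrow>
     (\<forall>h i. Inl i \<in> set_pmf (A h) \<longrightarrow> real (length h) + 1 \<le> B) \<and>
     (\<forall>h a. Inr a \<in> set_pmf (A h) \<longrightarrow> a \<in> {0..1})"

definition reservoir :: "real measure \<Rightarrow> bool" where
  "reservoir \<mu> \<longleftrightarrow> prob_space \<mu> \<and> sets \<mu> = sets borel \<and> emeasure \<mu> {0..1} = 1"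

definition G :: "real measure \<Rightarrow> real \<Rightarrow> real" where
  "G \<mu> \<tau> = measure \<mu> {0..\<tau>}"

definition G_inv :: "real measure \<Rightarrow> real \<Rightarrow> real" where
  "G_inv \<mu> q = Inf {\<tau>. G \<mu> \<tau> \<ge> q}"

definition success_prob :: "real measure \<Rightarrow> bandit_alg \<Rightarrow> nat \<Rightarrow> real set \<Rightarrow> ennreal" where
  "success_prob \<mu> A n S =
     (\<integral>\<^sup>+ p. ennreal (measure_pmf.prob (alg_output A p n []) S) \<partial>(PiM UNIV (\<lambda>_. \<mu>)))"

end

(*
  Pull each of r * k fresh arms m times. Averaged over the i.i.d. means, the success counts of
  the arms are i.i.d., distributed as the mixture nu of Binomial(m, p) over p ~ mu. By Hoeffding
  with m ~ log(1/eta2) / eps^2, the probability under nu of at least s successes is, up to an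
  error eta2/8, the mu-mass above a level eps/6 away from s/m.

  Split the arms into r groups of k ~ eta1 / eta2^2 arms; a group approves the threshold s if at
  least j ~ k (eta1 - eta2/2) of its arms reach s. For the threshold belonging to the quantile
  G^-1(1 - eta1) the number of arms reaching it is binomial with mean at least
  k (eta1 - eta2/8), for the one belonging to G^-1(1 - eta1 + eta2) with mean at most
  k (eta1 - 7 eta2/8). A binomial has variance at most its mean, so by Chebyshev a group decides
  both thresholds correctly with probability 7/8 each; this is why k ~ eta1 / eta2^2 suffices.
  With r ~ log(1/delta) groups, Hoeffding shows that the largest threshold approved by a
  majority, divided by m, misses the target interval with probability at most
  2 exp(-9r/32) <= delta/2.
*)
theory Submission
  imports Defs
begin

section \<open>Binomial tail bounds\<close>

lemma expectation_binomial_pmf_Suc: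
  fixes h :: "nat \<Rightarrow> real"
  assumes q: "q \<in> {0..1}"
  shows "measure_pmf.expectation (binomial_pmf (Suc n) q) h =
     q * measure_pmf.expectation (binomial_pmf n q) (\<lambda>s. h (Suc s))
     + (1 - q) * measure_pmf.expectation (binomial_pmf n q) h"
proof -
  have "binomial_pmf (Suc n) q =
      bernoulli_pmf q \<bind> (\<lambda>b. map_pmf (\<lambda>s. (if b then 1 else 0) + s) (binomial_pmf n q))"
    using q by (simp add: binomial_pmf_Suc map_pmf_def)
  also have "measure_pmf.expectation \<dots> h = (\<Sum>b\<in>UNIV. pmf (bernoulli_pmf q) b *\<^sub>R
      measure_pmf.expectation (map_pmf (\<lambda>s. (if b then 1 else 0) + s) (binomial_pmf n q)) h)"
    using q by (intro pmf_expectation_bind) (auto intro!: finite_imageI)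
  finally show ?thesis
    using q by (simp add: UNIV_bool)
qed

lemma binomial_pmf_central_moment2:
  assumes q: "q \<in> {0..1}"
  shows "measure_pmf.expectation (binomial_pmf n q) (\<lambda>s. (real s - n * q)\<^sup>2) = n * q * (1 - q)"
proof (induction n)
  case 0
  then show ?case using q by (simp add: binomial_pmf_0)
next
  case (Suc n)
  let ?E = "measure_pmf.expectation (binomial_pmf n q)"
  let ?Y = "\<lambda>s. real s - n * q"
  have shift: "?E (\<lambda>s. (?Y s + c)\<^sup>2) = ?E (\<lambda>s. (?Y s)\<^sup>2) + 2 * c * ?E ?Y + c\<^sup>2" for c
  proof -
    have "?E (\<lambda>s. (?Y s + c)\<^sup>2) = ?E (\<lambda>s. (?Y s)\<^sup>2 + 2 * c * ?Y s + c\<^sup>2)"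
      by (intro Bochner_Integration.integral_cong refl) (simp add: power2_eq_square algebra_simps)
    then show ?thesis using q by simp
  qed
  \<comment> \<open>The linear terms of the two branches cancel, so no knowledge of the mean is needed.\<close>
  have "measure_pmf.expectation (binomial_pmf (Suc n) q) (\<lambda>s. (real s - Suc n * q)\<^sup>2)
      = q * ?E (\<lambda>s. (?Y s + (1 - q))\<^sup>2) + (1 - q) * ?E (\<lambda>s. (?Y s + - q)\<^sup>2)"
    by (simp add: expectation_binomial_pmf_Suc[OF q] algebra_simps)
  also have "\<dots> = ?E (\<lambda>s. (?Y s)\<^sup>2) + q * (1 - q)"
    unfolding shift by (simp add: algebra_simps power2_eq_square)
  finally show ?case using Suc.IH by (simp add: algebra_simps)
qed

lemma binomial_pmf_prob_abs_dev_ge: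
  assumes q: "q \<in> {0..1}" and d: "d > 0" and n: "n > 0"
  shows "measure_pmf.prob (binomial_pmf n q) {s. n * d \<le> \<bar>real s - n * q\<bar>} \<le> q / (n * d\<^sup>2)"
proof -
  have "measure_pmf.prob (binomial_pmf n q) {s. n * d \<le> \<bar>real s - n * q\<bar>} \<le> n * q * (1 - q) / (n * d)\<^sup>2"
    using measure_pmf.second_moment_method[of "\<lambda>s. real s - n * q" "binomial_pmf n q" "n * d"] q d n
    by (simp add: binomial_pmf_central_moment2)
  also have "\<dots> \<le> n * q / (n * d)\<^sup>2"
    using q by (intro divide_right_mono) (auto simp: mult_left_le)
  also have "\<dots> = q / (n * d\<^sup>2)"
    using n by (simp add: power2_eq_square)
  finally show ?thesis .
qed

lemma sq_gap_above_threshold: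
  fixes \<eta>1 \<eta>2 q k :: real
  assumes \<eta>: "0 < \<eta>2" "\<eta>2 \<le> \<eta>1" and q: "\<eta>1 - \<eta>2/8 \<le> q" and k: "128 * \<eta>1 / \<eta>2\<^sup>2 \<le> k"
  shows "18 * q \<le> k * (q - (\<eta>1 - \<eta>2/2))\<^sup>2"
proof -
  define t where "t = \<eta>1 - \<eta>2/2"
  define q0 where "q0 = \<eta>1 - \<eta>2/8"
  have t: "0 < t" "t < q0" and q0: "q0 \<le> q" "q0 \<le> \<eta>1" "(q0 - t)\<^sup>2 = 9 * \<eta>2\<^sup>2 / 64"
    using \<eta> q unfolding t_def q0_def by (auto simp: power2_eq_square)
  have k_\<eta>: "18 * \<eta>1 \<le> k * (9 * \<eta>2\<^sup>2 / 64)"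
    using k \<eta> by (simp add: field_simps)
  have "0 \<le> 128 * \<eta>1 / \<eta>2\<^sup>2"
    using \<eta> by simp
  then have "0 \<le> k"
    using k by linarith
  \<comment> \<open>\<open>q / (q - t)\<^sup>2\<close> decreases in \<open>q > t \<ge> 0\<close>, so its worst case is \<open>q = q0\<close>.\<close>
  have "q * (q0 - t)\<^sup>2 \<le> q0 * (q - t)\<^sup>2"
  proof -
    have "q0 * (q - t)\<^sup>2 - q * (q0 - t)\<^sup>2 = (q - q0) * (q * q0 - t * t)"
      by (simp add: power2_eq_square algebra_simps)
    moreover have "t * t \<le> q * q0"
      using t q0 by (intro mult_mono) auto
    then have "0 \<le> (q - q0) * (q * q0 - t * t)"
      using q0 by simp
    ultimately show ?thesis by linarith
  qed
  then have worst_case: "q * (9 * \<eta>2\<^sup>2 / 64) \<le> q0 * (q - t)\<^sup>2"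
    using q0 by simp
  have "q0 * (18 * q) \<le> q * (k * (9 * \<eta>2\<^sup>2 / 64))"
    using mult_left_mono[OF order.trans[OF _ k_\<eta>], of "18 * q0" q] q0 t by (simp add: algebra_simps)
  also have "\<dots> \<le> q0 * (k * (q - t)\<^sup>2)"
    using mult_left_mono[OF worst_case \<open>0 \<le> k\<close>] by (simp add: algebra_simps)
  finally show ?thesis
    using q0 t unfolding t_def by (simp only: mult_le_cancel_left_pos)
qed

lemma sq_gap_below_threshold:
  fixes \<eta>1 \<eta>2 q k :: real
  assumes \<eta>: "0 < \<eta>2" and q: "0 \<le> q" "q \<le> \<eta>1 - 7 * \<eta>2/8" and k: "128 * \<eta>1 / \<eta>2\<^sup>2 \<le> k"
  shows "18 * q \<le> k * ((\<eta>1 - \<eta>2/2) - q)\<^sup>2"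
proof -
  have k_\<eta>: "18 * \<eta>1 \<le> k * (9 * \<eta>2\<^sup>2 / 64)"
    using k \<eta> by (simp add: field_simps)
  have "0 \<le> 128 * \<eta>1 / \<eta>2\<^sup>2"
    using \<eta> q by simp
  then have "0 \<le> k"
    using k by linarith
  have "(3 * \<eta>2 / 8)\<^sup>2 \<le> ((\<eta>1 - \<eta>2/2) - q)\<^sup>2"
    using \<eta> q by (intro power_mono) auto
  then have "k * (9 * \<eta>2\<^sup>2 / 64) \<le> k * ((\<eta>1 - \<eta>2/2) - q)\<^sup>2"
    using \<open>0 \<le> k\<close> by (intro mult_left_mono) (auto simp: power2_eq_square)
  then show ?thesis
    using k_\<eta> q \<eta> by linarith
qed

lemma binomial_pmf_prob_at_least_high:
  fixes \<eta>1 \<eta>2 q :: real and k j :: nat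
  assumes \<eta>: "0 < \<eta>2" "\<eta>2 \<le> \<eta>1" and q: "\<eta>1 - \<eta>2/8 \<le> q" "q \<le> 1"
    and k: "128 * \<eta>1 / \<eta>2\<^sup>2 \<le> k" and j: "real j - 1 < k * (\<eta>1 - \<eta>2/2)"
  shows "7/8 \<le> measure_pmf.prob (binomial_pmf k q) {c. j \<le> c}"
proof -
  define t where "t = \<eta>1 - \<eta>2/2"
  have t: "0 < t" "t < q"
    using \<eta> q unfolding t_def by auto
  have "0 < 128 * \<eta>1 / \<eta>2\<^sup>2"
    using \<eta> by simp
  then have k_pos: "k > 0"
    using k by linarith
  have "measure_pmf.prob (binomial_pmf k q) {c. \<not> j \<le> c}
      \<le> measure_pmf.prob (binomial_pmf k q) {c. k * (q - t) \<le> \<bar>real c - k * q\<bar>}"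
    using j unfolding t_def by (intro measure_pmf.finite_measure_mono) (auto simp: algebra_simps)
  also have "\<dots> \<le> q / (k * (q - t)\<^sup>2)"
    using q t k_pos by (intro binomial_pmf_prob_abs_dev_ge) auto
  also have "\<dots> \<le> 1/8"
    using sq_gap_above_threshold[OF \<eta> q(1) k] t k_pos unfolding t_def by (simp add: divide_le_eq)
  finally show ?thesis
    using measure_pmf.prob_compl[of "{c. j \<le> c}" "binomial_pmf k q"]
    by (simp add: Compl_eq_Diff_UNIV[symmetric] Collect_neg_eq)
qed

lemma binomial_pmf_prob_at_least_low:
  fixes \<eta>1 \<eta>2 q :: real and k j :: nat
  assumes \<eta>: "0 < \<eta>2" "\<eta>2 \<le> \<eta>1" and q: "0 \<le> q" "q \<le> 1" "q \<le> \<eta>1 - 7 * \<eta>2/8"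
    and k: "128 * \<eta>1 / \<eta>2\<^sup>2 \<le> k" and j: "k * (\<eta>1 - \<eta>2/2) \<le> real j"
  shows "measure_pmf.prob (binomial_pmf k q) {c. j \<le> c} \<le> 1/8"
proof -
  define t where "t = \<eta>1 - \<eta>2/2"
  have t: "q < t"
    using \<eta> q unfolding t_def by auto
  have "0 < 128 * \<eta>1 / \<eta>2\<^sup>2"
    using \<eta> by simp
  then have k_pos: "k > 0"
    using k by linarith
  have "measure_pmf.prob (binomial_pmf k q) {c. j \<le> c}
      \<le> measure_pmf.prob (binomial_pmf k q) {c. k * (t - q) \<le> \<bar>real c - k * q\<bar>}"
    using j unfolding t_def by (intro measure_pmf.finite_measure_mono) (auto simp: algebra_simps)
  also have "\<dots> \<le> q / (k * (t - q)\<^sup>2)"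
    using q t k_pos by (intro binomial_pmf_prob_abs_dev_ge) auto
  also have "\<dots> \<le> 1/8"
    using sq_gap_below_threshold[OF \<eta>(1) q(1,3) k] q t k_pos unfolding t_def by (simp add: divide_le_eq)
  finally show ?thesis .
qed

lemma binomial_pmf_prob_minority_le:
  assumes "7/8 \<le> \<pi>" "\<pi> \<le> 1" "r > 0"
  shows "measure_pmf.prob (binomial_pmf r \<pi>) {c. 2 * c \<le> r} \<le> exp (- 9 * real r / 32)"
proof -
  interpret binomial_distribution r \<pi> by standard (use assms in auto)
  have "real c / r \<le> \<pi> - 3/8" if "2 * c \<le> r" for c
  proof -
    have "real c / r \<le> 1/2" using that assms(3) by (simp add: field_simps)
    then show ?thesis using assms(1) by linarith
  qed
  then have "measure_pmf.prob (binomial_pmf r \<pi>) {c. 2 * c \<le> r}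
      \<le> measure_pmf.prob (binomial_pmf r \<pi>) {c. real c / r \<le> \<pi> - 3/8}"
    by (intro measure_pmf.finite_measure_mono) auto
  also have "\<dots> \<le> exp (- 2 * r * (3/8)\<^sup>2)"
    using prob_le'[of "3/8"] assms by simp
  finally show ?thesis by (simp add: power2_eq_square)
qed

lemma binomial_pmf_prob_majority_le:
  assumes "0 \<le> \<pi>" "\<pi> \<le> 1/8" "r > 0"
  shows "measure_pmf.prob (binomial_pmf r \<pi>) {c. r \<le> 2 * c} \<le> exp (- 9 * real r / 32)"
proof -
  interpret binomial_distribution r \<pi> by standard (use assms in auto)
  have "\<pi> + 3/8 \<le> real c / r" if "r \<le> 2 * c" for c
  proof -
    have "1/2 \<le> real c / r" using that assms(3) by (simp add: field_simps)
    then show ?thesis using assms(2) by linarith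
  qed
  then have "measure_pmf.prob (binomial_pmf r \<pi>) {c. r \<le> 2 * c}
      \<le> measure_pmf.prob (binomial_pmf r \<pi>) {c. \<pi> + 3/8 \<le> real c / r}"
    by (intro measure_pmf.finite_measure_mono) auto
  also have "\<dots> \<le> exp (- 2 * r * (3/8)\<^sup>2)"
    using prob_ge'[of "3/8"] assms by simp
  finally show ?thesis by (simp add: power2_eq_square)
qed

section \<open>Lists of independent draws\<close>

lemma map_pmf_eq_bernoulli_pmf: "map_pmf P q = bernoulli_pmf (measure_pmf.prob q {x. P x})"
proof (rule pmf_eqI)
  fix b :: bool
  have "measure_pmf.prob q {x. \<not> P x} = 1 - measure_pmf.prob q {x. P x}"
    using measure_pmf.prob_compl[of "{x. P x}" q] by (simp add: Compl_eq_Diff_UNIV[symmetric] Collect_neg_eq)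
  then show "pmf (map_pmf P q) b = pmf (bernoulli_pmf (measure_pmf.prob q {x. P x})) b"
    by (cases b) (auto simp: pmf_map vimage_def)
qed

lemma replicate_pmf_map_pmf: "replicate_pmf n (map_pmf f q) = map_pmf (map f) (replicate_pmf n q)"
  by (induction n) (simp_all add: bind_map_pmf map_bind_pmf)

lemma replicate_pmf_count_eq_binomial_pmf:
  "map_pmf (\<lambda>xs. length (filter P xs)) (replicate_pmf n q) = binomial_pmf n (measure_pmf.prob q {x. P x})"
proof -
  have "binomial_pmf n (measure_pmf.prob q {x. P x}) = map_pmf (length \<circ> filter id) (replicate_pmf n (map_pmf P q))"
    by (simp add: binomial_pmf_altdef map_pmf_eq_bernoulli_pmf)
  also have "\<dots> = map_pmf (\<lambda>xs. length (filter P xs)) (replicate_pmf n q)"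
    by (simp add: replicate_pmf_map_pmf pmf.map_comp o_def filter_map)
  finally show ?thesis ..
qed

primrec indep_pmfs :: "'a pmf list \<Rightarrow> 'a list pmf" where
  "indep_pmfs [] = return_pmf []"
| "indep_pmfs (q # qs) = q \<bind> (\<lambda>x. map_pmf ((#) x) (indep_pmfs qs))"

lemma indep_pmfs_replicate: "indep_pmfs (replicate n q) = replicate_pmf n q"
  by (induction n) (simp_all add: map_pmf_def)

lemma indep_pmfs_append:
  "indep_pmfs (qs @ qs') = do {xs \<leftarrow> indep_pmfs qs; ys \<leftarrow> indep_pmfs qs'; return_pmf (xs @ ys)}"
  by (induction qs) (simp_all add: map_pmf_def bind_return_pmf bind_return_pmf' bind_assoc_pmf)

lemma indep_pmfs_concat: "indep_pmfs (concat Qs) = map_pmf concat (indep_pmfs (map indep_pmfs Qs))"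
  by (induction Qs) (simp_all add: indep_pmfs_append map_pmf_def bind_return_pmf bind_assoc_pmf)

lemma indep_pmfs_map_map_pmf: "indep_pmfs (map (map_pmf f) qs) = map_pmf (map f) (indep_pmfs qs)"
  by (induction qs) (simp_all add: bind_map_pmf map_bind_pmf pmf.map_comp o_def)

lemma set_indep_pmfs: "xs \<in> set_pmf (indep_pmfs qs) \<Longrightarrow> list_all2 (\<lambda>x q. x \<in> set_pmf q) xs qs"
  by (induction qs arbitrary: xs) auto

lemma pmf_indep_pmfs:
  "pmf (indep_pmfs qs) xs = (if length xs = length qs then \<Prod>i<length qs. pmf (qs ! i) (xs ! i) else 0)"
proof (induction qs arbitrary: xs)
  case Nil
  then show ?case by (simp add: pmf_return)
next
  case (Cons q qs)
  show ?case
  proof (cases xs)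
    case Nil
    then show ?thesis by (auto simp: pmf_eq_0_set_pmf)
  next
    case (Cons x xs')
    have "indep_pmfs (q # qs) = map_pmf (\<lambda>(x, xs). x # xs) (pair_pmf q (indep_pmfs qs))"
      by (simp add: pair_pmf_def map_pmf_def bind_assoc_pmf bind_return_pmf)
    then have "pmf (indep_pmfs (q # qs)) xs = pmf q x * pmf (indep_pmfs qs) xs'"
      using Cons pmf_map_inj'[of "\<lambda>(x, xs). x # xs" _ "(x, xs')"] by (simp add: inj_def pmf_pair)
    then show ?thesis
      using Cons Cons.IH by (simp del: prod.lessThan_Suc add: prod.lessThan_Suc_shift)
  qed
qed

lemma pmf_replicate_pmf:
  "pmf (replicate_pmf n q) xs = (if length xs = n then \<Prod>i<n. pmf q (xs ! i) else 0)"
  by (auto simp: indep_pmfs_replicate[symmetric] pmf_indep_pmfs intro!: prod.cong)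

definition chunk :: "nat \<Rightarrow> 'a list \<Rightarrow> nat \<Rightarrow> 'a list" where
  "chunk k xs g = take k (drop (g * k) xs)"

lemma chunk_concat:
  "\<forall>G\<in>set Gs. length G = k \<Longrightarrow> g < length Gs \<Longrightarrow> chunk k (concat Gs) g = Gs ! g"
proof (induction Gs arbitrary: g)
  case (Cons G Gs)
  then show ?case by (cases g) (simp_all add: chunk_def drop_append)
qed simp

section \<open>The median-of-groups statistic\<close>

definition good_groups :: "nat \<Rightarrow> nat \<Rightarrow> nat \<Rightarrow> nat list \<Rightarrow> nat \<Rightarrow> nat" where
  "good_groups k r j xs s = card {g. g < r \<and> j \<le> length (filter (\<lambda>x. s \<le> x) (chunk k xs g))}"

text \<open>A median over the \<open>r\<close> groups of the \<open>j\<close>-th largest of the \<open>k\<close> counts in each group.\<close>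
definition median_threshold :: "nat \<Rightarrow> nat \<Rightarrow> nat \<Rightarrow> nat \<Rightarrow> nat list \<Rightarrow> nat" where
  "median_threshold m k r j xs = Max (insert 0 {s. s \<le> m \<and> r < 2 * good_groups k r j xs s})"

lemma good_groups_antimono:
  assumes "s \<le> s'"
  shows "good_groups k r j xs s' \<le> good_groups k r j xs s"
proof -
  have "length (filter (\<lambda>x. s' \<le> x) G) \<le> length (filter (\<lambda>x. s \<le> x) G)" for G :: "nat list"
    using assms by (induction G) auto
  then show ?thesis
    unfolding good_groups_def by (intro card_mono) (auto intro: le_trans)
qed

lemma median_threshold_le: "median_threshold m k r j xs \<le> m"
  unfolding median_threshold_def by (intro Max.boundedI) auto

lemma median_threshold_bounds:
  assumes "s_lo \<le> m" "r < 2 * good_groups k r j xs s_lo" "2 * good_groups k r j xs s_hi < r"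
  shows "s_lo \<le> median_threshold m k r j xs \<and> median_threshold m k r j xs < s_hi"
proof -
  let ?S = "insert 0 {s. s \<le> m \<and> r < 2 * good_groups k r j xs s}"
  have below_hi: "s < s_hi" if "r < 2 * good_groups k r j xs s" for s
  proof (rule ccontr)
    assume "\<not> s < s_hi"
    then have "good_groups k r j xs s \<le> good_groups k r j xs s_hi"
      by (intro good_groups_antimono) simp
    then show False using that assms(3) by simp
  qed
  have fin: "finite ?S" by auto
  have "s < s_hi" if "s \<in> ?S" for s
    using that below_hi[OF assms(2)] below_hi by auto
  then show ?thesis
    using assms(1,2) fin unfolding median_threshold_def by (auto intro: Max_ge)
qed

lemma good_groups_replicate_pmf:
  "map_pmf (\<lambda>xs. good_groups k r j xs s) (replicate_pmf (r * k) \<nu>) =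
   binomial_pmf r (measure_pmf.prob (binomial_pmf k (measure_pmf.prob \<nu> {x. s \<le> x})) {c. j \<le> c})"
proof -
  let ?good = "\<lambda>G. j \<le> length (filter (\<lambda>x. s \<le> x) G)"
  have "concat (replicate r (replicate k \<nu>)) = replicate (r * k) \<nu>"
    by (induction r) (simp_all add: replicate_add)
  then have split: "replicate_pmf (r * k) \<nu> = map_pmf concat (replicate_pmf r (replicate_pmf k \<nu>))"
    using indep_pmfs_concat[of "replicate r (replicate k \<nu>)"] by (simp add: indep_pmfs_replicate)
  have "good_groups k r j (concat Gs) s = length (filter ?good Gs)"
    if "Gs \<in> set_pmf (replicate_pmf r (replicate_pmf k \<nu>))" for Gs
    using that chunk_concat[of Gs k] unfolding good_groups_def length_filter_conv_card
    by (intro arg_cong[where f = card]) (auto simp: set_replicate_pmf)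
  then have "map_pmf (\<lambda>xs. good_groups k r j xs s) (replicate_pmf (r * k) \<nu>)
      = binomial_pmf r (measure_pmf.prob (replicate_pmf k \<nu>) {G. ?good G})"
    unfolding split pmf.map_comp o_def replicate_pmf_count_eq_binomial_pmf[symmetric]
    by (intro map_pmf_cong) auto
  also have "measure_pmf.prob (replicate_pmf k \<nu>) {G. ?good G}
      = measure_pmf.prob (binomial_pmf k (measure_pmf.prob \<nu> {x. s \<le> x})) {c. j \<le> c}"
    by (simp add: replicate_pmf_count_eq_binomial_pmf[symmetric] vimage_def)
  finally show ?thesis .
qed

lemma median_threshold_concentration:
  fixes \<nu> :: "nat pmf"
  assumes "s_lo \<le> m" "r > 0"
    and lo: "7/8 \<le> measure_pmf.prob (binomial_pmf k (measure_pmf.prob \<nu> {x. s_lo \<le> x})) {c. j \<le> c}"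
    and hi: "measure_pmf.prob (binomial_pmf k (measure_pmf.prob \<nu> {x. s_hi \<le> x})) {c. j \<le> c} \<le> 1/8"
  shows "1 - 2 * exp (- 9 * real r / 32) \<le> measure_pmf.prob (replicate_pmf (r * k) \<nu>)
     {xs. s_lo \<le> median_threshold m k r j xs \<and> median_threshold m k r j xs < s_hi}"
proof -
  let ?P = "replicate_pmf (r * k) \<nu>"
  let ?Lo = "{xs. 2 * good_groups k r j xs s_lo \<le> r}"
  let ?Hi = "{xs. r \<le> 2 * good_groups k r j xs s_hi}"
  have prob_good_groups: "measure_pmf.prob ?P {xs. Q (good_groups k r j xs s)}
      = measure_pmf.prob (binomial_pmf r (measure_pmf.prob (binomial_pmf k
          (measure_pmf.prob \<nu> {x. s \<le> x})) {c. j \<le> c})) {c. Q c}" for Q s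
    by (simp flip: good_groups_replicate_pmf add: vimage_def)
  define A where "A = {xs. s_lo \<le> median_threshold m k r j xs \<and> median_threshold m k r j xs < s_hi}"
  have Lo: "measure_pmf.prob ?P ?Lo \<le> exp (- 9 * real r / 32)"
    using prob_good_groups[of "\<lambda>c. 2 * c \<le> r" s_lo] binomial_pmf_prob_minority_le[OF lo] assms
    by simp
  have Hi: "measure_pmf.prob ?P ?Hi \<le> exp (- 9 * real r / 32)"
    using prob_good_groups[of "\<lambda>c. r \<le> 2 * c" s_hi] binomial_pmf_prob_majority_le[OF _ hi] assms
    by simp
  have "1 - measure_pmf.prob ?P A = measure_pmf.prob ?P (UNIV - A)"
    using measure_pmf.prob_compl[of A ?P] by simp
  also have "\<dots> \<le> measure_pmf.prob ?P (?Lo \<union> ?Hi)"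
    using median_threshold_bounds[OF assms(1), of r k j] unfolding A_def
    by (intro measure_pmf.finite_measure_mono) (force simp: not_le)+
  also have "\<dots> \<le> measure_pmf.prob ?P ?Lo + measure_pmf.prob ?P ?Hi"
    by (rule measure_subadditive) auto
  finally show ?thesis using Lo Hi unfolding A_def by linarith
qed

section \<open>Mixtures of distributions\<close>

lemma nn_integral_PiM_prod_lessThan:
  fixes f :: "nat \<Rightarrow> 'a \<Rightarrow> ennreal"
  assumes \<mu>: "prob_space \<mu>" and f: "\<And>i. i < n \<Longrightarrow> f i \<in> borel_measurable \<mu>"
  shows "(\<integral>\<^sup>+ p. (\<Prod>i<n. f i (p i)) \<partial>PiM UNIV (\<lambda>_. \<mu>)) = (\<Prod>i<n. \<integral>\<^sup>+ x. f i x \<partial>\<mu>)"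
proof -
  interpret product_prob_space "\<lambda>_. \<mu>" UNIV
    by (simp add: product_prob_space_def product_prob_space_axioms_def product_sigma_finite_def
        \<mu> prob_space_imp_sigma_finite)
  have restrict: "distr (PiM UNIV (\<lambda>_. \<mu>)) (PiM {..<n} (\<lambda>_. \<mu>)) (\<lambda>p. restrict p {..<n})
      = PiM {..<n} (\<lambda>_. \<mu>)"
    by (rule distr_PiM_restrict_finite) auto
  have meas: "(\<lambda>p. \<Prod>i<n. f i (p i)) \<in> borel_measurable (PiM {..<n} (\<lambda>_. \<mu>))"
    using f by (intro borel_measurable_prod_ennreal measurable_compose[OF measurable_component_singleton]) auto
  have "(\<integral>\<^sup>+ p. (\<Prod>i<n. f i (p i)) \<partial>PiM UNIV (\<lambda>_. \<mu>))
      = (\<integral>\<^sup>+ p. (\<Prod>i<n. f i (restrict p {..<n} i)) \<partial>PiM UNIV (\<lambda>_. \<mu>))"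
    by (intro nn_integral_cong prod.cong) auto
  also have "\<dots> = (\<integral>\<^sup>+ p. (\<Prod>i<n. f i (p i)) \<partial>PiM {..<n} (\<lambda>_. \<mu>))"
    using meas by (subst restrict[symmetric], subst nn_integral_distr) (auto intro: measurable_restrict_subset)
  also have "\<dots> = (\<Prod>i<n. \<integral>\<^sup>+ x. f i x \<partial>\<mu>)"
    using f by (subst product_nn_integral_prod) auto
  finally show ?thesis .
qed

definition mixture_pmf :: "'a measure \<Rightarrow> ('a \<Rightarrow> 'b pmf) \<Rightarrow> 'b pmf" where
  "mixture_pmf \<mu> K = embed_pmf (\<lambda>y. enn2real (\<integral>\<^sup>+ x. pmf (K x) y \<partial>\<mu>))"

context
  fixes \<mu> :: "'a measure" and K :: "'a \<Rightarrow> 'b::countable pmf"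
  assumes \<mu>: "prob_space \<mu>" and K: "\<And>y. (\<lambda>x. ennreal (pmf (K x) y)) \<in> borel_measurable \<mu>"
begin

lemma pmf_mixture_pmf: "ennreal (pmf (mixture_pmf \<mu> K) y) = (\<integral>\<^sup>+ x. pmf (K x) y \<partial>\<mu>)"
proof -
  interpret prob_space \<mu> by (rule \<mu>)
  have finite: "(\<integral>\<^sup>+ x. pmf (K x) y \<partial>\<mu>) < \<top>" for y
  proof -
    have "(\<integral>\<^sup>+ x. pmf (K x) y \<partial>\<mu>) \<le> (\<integral>\<^sup>+ x. 1 \<partial>\<mu>)"
      by (intro nn_integral_mono) (simp add: pmf_le_1)
    then have "(\<integral>\<^sup>+ x. pmf (K x) y \<partial>\<mu>) \<le> 1"
      by (simp add: emeasure_space_1)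
    then show ?thesis
      using neq_top_trans[OF ennreal_one_neq_top] by (simp add: less_top)
  qed
  have "(\<integral>\<^sup>+ y. (\<integral>\<^sup>+ x. pmf (K x) y \<partial>\<mu>) \<partial>count_space UNIV)
      = (\<integral>\<^sup>+ x. (\<integral>\<^sup>+ y. pmf (K x) y \<partial>count_space UNIV) \<partial>\<mu>)"
    using K by (intro nn_integral_count_space_nn_integral[symmetric]) auto
  also have "\<dots> = 1"
    by (simp add: nn_integral_pmf emeasure_space_1)
  finally have "(\<integral>\<^sup>+ y. ennreal (enn2real (\<integral>\<^sup>+ x. pmf (K x) y \<partial>\<mu>)) \<partial>count_space UNIV) = 1"
    using finite by simp
  then have "pmf (mixture_pmf \<mu> K) y = enn2real (\<integral>\<^sup>+ x. pmf (K x) y \<partial>\<mu>)"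
    unfolding mixture_pmf_def by (intro pmf_embed_pmf) auto
  then show ?thesis using finite by simp
qed

lemma emeasure_mixture_pmf: "emeasure (mixture_pmf \<mu> K) A = (\<integral>\<^sup>+ x. emeasure (K x) A \<partial>\<mu>)"
proof -
  have "emeasure (mixture_pmf \<mu> K) A = (\<integral>\<^sup>+ y. (\<integral>\<^sup>+ x. pmf (K x) y \<partial>\<mu>) \<partial>count_space A)"
    by (simp add: nn_integral_pmf[symmetric] pmf_mixture_pmf)
  also have "\<dots> = (\<integral>\<^sup>+ x. (\<integral>\<^sup>+ y. pmf (K x) y \<partial>count_space A) \<partial>\<mu>)"
    using K by (intro nn_integral_count_space_nn_integral[symmetric]) auto
  finally show ?thesis by (simp add: nn_integral_pmf)
qed

lemma nn_integral_PiM_emeasure_indep_pmfs: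
  "(\<integral>\<^sup>+ p. emeasure (indep_pmfs (map (\<lambda>i. K (p i)) [0..<n])) E \<partial>PiM UNIV (\<lambda>_. \<mu>))
     = emeasure (replicate_pmf n (mixture_pmf \<mu> K)) E"
proof -
  have pmf_indep: "ennreal (pmf (indep_pmfs (map (\<lambda>i. K (p i)) [0..<n])) xs)
      = (if length xs = n then \<Prod>i<n. ennreal (pmf (K (p i)) (xs ! i)) else 0)" for p xs
    by (simp add: pmf_indep_pmfs prod_ennreal)
  have "(\<integral>\<^sup>+ p. emeasure (indep_pmfs (map (\<lambda>i. K (p i)) [0..<n])) E \<partial>PiM UNIV (\<lambda>_. \<mu>))
      = (\<integral>\<^sup>+ xs. (\<integral>\<^sup>+ p. pmf (indep_pmfs (map (\<lambda>i. K (p i)) [0..<n])) xs \<partial>PiM UNIV (\<lambda>_. \<mu>)) \<partial>count_space E)"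
    unfolding nn_integral_pmf[symmetric] pmf_indep
    using K by (intro nn_integral_count_space_nn_integral)
      (auto intro!: borel_measurable_prod_ennreal measurable_compose[OF measurable_component_singleton])
  also have "\<dots> = (\<integral>\<^sup>+ xs. pmf (replicate_pmf n (mixture_pmf \<mu> K)) xs \<partial>count_space E)"
  proof (intro nn_integral_cong)
    fix xs
    have "(\<integral>\<^sup>+ p. (\<Prod>i<n. ennreal (pmf (K (p i)) (xs ! i))) \<partial>PiM UNIV (\<lambda>_. \<mu>))
        = (\<Prod>i<n. ennreal (pmf (mixture_pmf \<mu> K) (xs ! i)))"
      using nn_integral_PiM_prod_lessThan[OF \<mu>, of n "\<lambda>i x. ennreal (pmf (K x) (xs ! i))"] K
      by (simp add: pmf_mixture_pmf)
    then show "(\<integral>\<^sup>+ p. pmf (indep_pmfs (map (\<lambda>i. K (p i)) [0..<n])) xs \<partial>PiM UNIV (\<lambda>_. \<mu>))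
        = pmf (replicate_pmf n (mixture_pmf \<mu> K)) xs"
      unfolding pmf_indep by (simp add: pmf_replicate_pmf prod_ennreal)
  qed
  finally show ?thesis by (simp add: nn_integral_pmf)
qed

lemma prob_mixture_pmf_lower:
  assumes S: "S \<in> sets \<mu>" and \<eta>: "\<eta> \<le> 1"
    and lower: "\<And>x. x \<in> S \<Longrightarrow> 1 - \<eta> \<le> measure_pmf.prob (K x) T"
  shows "(1 - \<eta>) * measure \<mu> S \<le> measure_pmf.prob (mixture_pmf \<mu> K) T"
proof -
  interpret prob_space \<mu> by (rule \<mu>)
  have "ennreal ((1 - \<eta>) * measure \<mu> S) = (\<integral>\<^sup>+ x. ennreal (1 - \<eta>) * indicator S x \<partial>\<mu>)"
    using S \<eta> by (simp add: nn_integral_cmult_indicator emeasure_eq_measure ennreal_mult)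
  also have "\<dots> \<le> (\<integral>\<^sup>+ x. emeasure (K x) T \<partial>\<mu>)"
    using lower by (intro nn_integral_mono) (auto simp: indicator_def measure_pmf.emeasure_eq_measure)
  also have "\<dots> = ennreal (measure_pmf.prob (mixture_pmf \<mu> K) T)"
    using emeasure_mixture_pmf[of T] by (simp add: measure_pmf.emeasure_eq_measure)
  finally show ?thesis by (simp add: ennreal_le_iff)
qed

lemma prob_mixture_pmf_upper:
  assumes S: "S \<in> sets \<mu>" and \<eta>: "0 \<le> \<eta>"
    and upper: "\<And>x. x \<notin> S \<Longrightarrow> measure_pmf.prob (K x) T \<le> \<eta>"
  shows "measure_pmf.prob (mixture_pmf \<mu> K) T \<le> measure \<mu> S + \<eta>"
proof -
  interpret prob_space \<mu> by (rule \<mu>)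
  have "ennreal (measure_pmf.prob (mixture_pmf \<mu> K) T) = (\<integral>\<^sup>+ x. emeasure (K x) T \<partial>\<mu>)"
    using emeasure_mixture_pmf[of T] by (simp add: measure_pmf.emeasure_eq_measure)
  also have "\<dots> \<le> (\<integral>\<^sup>+ x. indicator S x + ennreal \<eta> \<partial>\<mu>)"
  proof (intro nn_integral_mono)
    fix x
    show "emeasure (K x) T \<le> indicator S x + ennreal \<eta>"
    proof (cases "x \<in> S")
      case True
      have "emeasure (K x) T \<le> 1"
        by (simp add: measure_pmf.emeasure_eq_measure)
      then show ?thesis using True by (simp add: add_increasing2)
    next
      case False
      then show ?thesis
        using upper[of x] by (simp add: measure_pmf.emeasure_eq_measure ennreal_leI)
    qed
  qed
  also have "\<dots> = ennreal (measure \<mu> S + \<eta>)"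
    using S \<eta> emeasure_eq_measure[of S] by (simp add: nn_integral_add emeasure_space_1 ennreal_plus)
  finally show ?thesis
    using \<eta> by (subst (asm) ennreal_le_iff) auto
qed

end

section \<open>Oblivious algorithms\<close>

text \<open>\<^const>\<open>bernoulli_pmf\<close> clamps its parameter to \<open>[0, 1]\<close>; means outside \<open>[0, 1]\<close> form a
  \<open>\<mu>\<close>-null set but still occur in the integral defining \<^const>\<open>success_prob\<close>.\<close>
definition clamp01 :: "real \<Rightarrow> real" where
  "clamp01 x = max 0 (min 1 x)"

lemma clamp01_in_unit: "clamp01 x \<in> {0..1}"
  unfolding clamp01_def by auto

lemma pmf_bernoulli_pmf_True: "pmf (bernoulli_pmf x) True = clamp01 x"
  unfolding clamp01_def bernoulli_pmf.rep_eq by (simp add: max_def min_def)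

definition pull :: "(nat \<Rightarrow> real) \<Rightarrow> nat \<Rightarrow> (nat \<times> bool) pmf" where
  "pull p i = map_pmf (Pair i) (bernoulli_pmf (p i))"

definition oblivious_alg :: "nat list \<Rightarrow> (history \<Rightarrow> real) \<Rightarrow> bandit_alg" where
  "oblivious_alg L f h = return_pmf (if length h < length L then Inl (L ! length h) else Inr (f h))"

lemma alg_output_oblivious_alg:
  "length L \<le> length h + n \<Longrightarrow>
   alg_output (oblivious_alg L f) p n h
     = map_pmf (\<lambda>t. f (h @ t)) (indep_pmfs (map (pull p) (drop (length h) L)))"
proof (induction n arbitrary: h)
  case 0
  then show ?case by (simp add: oblivious_alg_def)
next
  case (Suc n)
  show ?case
  proof (cases "length h < length L")
    case True
    let ?i = "L ! length h"
    have drop: "drop (length h) L = ?i # drop (Suc (length h)) L"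
      using True by (simp add: Cons_nth_drop_Suc)
    have "alg_output (oblivious_alg L f) p (Suc n) h
        = bernoulli_pmf (p ?i) \<bind> (\<lambda>b. alg_output (oblivious_alg L f) p n (h @ [(?i, b)]))"
      using True by (simp add: oblivious_alg_def bind_return_pmf)
    also have "\<dots> = bernoulli_pmf (p ?i) \<bind> (\<lambda>b. map_pmf (\<lambda>t. f (h @ (?i, b) # t))
        (indep_pmfs (map (pull p) (drop (Suc (length h)) L))))"
      using Suc.prems by (intro bind_pmf_cong refl) (simp add: Suc.IH)
    also have "\<dots> = map_pmf (\<lambda>t. f (h @ t)) (indep_pmfs (map (pull p) (drop (length h) L)))"
      unfolding drop by (simp add: pull_def bind_map_pmf map_bind_pmf pmf.map_comp o_def)
    finally show ?thesis .
  next
    case False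
    then show ?thesis by (simp add: oblivious_alg_def bind_return_pmf)
  qed
qed

lemma valid_alg_oblivious_alg:
  assumes "real (length L) \<le> B" "\<And>h. f h \<in> {0..1}"
  shows "valid_alg B (oblivious_alg L f)"
  using assms unfolding valid_alg_def oblivious_alg_def by (auto split: if_splits)

definition repeat_arms :: "nat \<Rightarrow> nat \<Rightarrow> nat list" where
  "repeat_arms m n = concat (map (replicate m) [0..<n])"

definition success_counts :: "nat \<Rightarrow> nat \<Rightarrow> history \<Rightarrow> nat list" where
  "success_counts m n h = map (\<lambda>i. length (filter snd (chunk m h i))) [0..<n]"

lemma length_repeat_arms: "length (repeat_arms m n) = n * m"
  unfolding repeat_arms_def by (induction n) simp_all

lemma success_counts_repeat_arms:
  "map_pmf (success_counts m n) (indep_pmfs (map (pull p) (repeat_arms m n)))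
     = indep_pmfs (map (\<lambda>i. binomial_pmf m (clamp01 (p i))) [0..<n])"
proof -
  let ?blocks = "indep_pmfs (map (\<lambda>i. replicate_pmf m (pull p i)) [0..<n])"
  let ?count = "\<lambda>u. length (filter snd u)"
  have count_binomial: "map_pmf ?count (replicate_pmf m (pull p i)) = binomial_pmf m (clamp01 (p i))" for i
  proof -
    have "{b. b} = {True}" by auto
    then show ?thesis
      unfolding replicate_pmf_count_eq_binomial_pmf
      by (simp add: pull_def vimage_def measure_pmf_single pmf_bernoulli_pmf_True)
  qed
  have "indep_pmfs (map (pull p) (repeat_arms m n)) = map_pmf concat ?blocks"
    unfolding repeat_arms_def map_concat indep_pmfs_concat
    by (simp add: o_def indep_pmfs_replicate)
  moreover have "success_counts m n (concat us) = map ?count us" if "us \<in> set_pmf ?blocks" for us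
  proof -
    have "length us = n" and "\<forall>u\<in>set us. length u = m"
      using set_indep_pmfs[OF that]
      by (auto simp: list_all2_conv_all_nth set_replicate_pmf in_set_conv_nth)
    then show ?thesis
      unfolding success_counts_def by (intro nth_equalityI) (simp_all add: chunk_concat)
  qed
  ultimately have "map_pmf (success_counts m n) (indep_pmfs (map (pull p) (repeat_arms m n)))
      = map_pmf (map ?count) ?blocks"
    by (simp add: pmf.map_comp o_def cong: map_pmf_cong)
  also have "\<dots> = indep_pmfs (map (map_pmf ?count) (map (\<lambda>i. replicate_pmf m (pull p i)) [0..<n]))"
    by (rule indep_pmfs_map_map_pmf[symmetric])
  finally show ?thesis by (simp add: o_def count_binomial)
qed

section \<open>Arms drawn from a reservoir\<close>

lemma borel_measurable_pmf_binomial_clamp01: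
  "(\<lambda>x. ennreal (pmf (binomial_pmf m (clamp01 x)) s)) \<in> borel_measurable borel"
proof -
  have "(\<lambda>x. pmf (binomial_pmf m (clamp01 x)) s)
      = (\<lambda>x. real (m choose s) * clamp01 x ^ s * (1 - clamp01 x) ^ (m - s))"
    using clamp01_in_unit by (intro ext) simp
  then show ?thesis
    unfolding clamp01_def by simp
qed

context
  fixes \<mu> :: "real measure"
  assumes \<mu>: "prob_space \<mu>" "sets \<mu> = sets borel"
begin

lemma measurable_pmf_binomial_clamp01:
  "(\<lambda>x. ennreal (pmf (binomial_pmf m (clamp01 x)) s)) \<in> borel_measurable \<mu>"
  using borel_measurable_pmf_binomial_clamp01 measurable_cong_sets[OF \<mu>(2) refl] by blast

lemma prob_mixture_binomial_at_least_lower: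
  fixes \<tau> d :: real and m :: nat
  assumes m: "m > 0" and \<tau>: "\<tau> < 1" and d: "0 \<le> d" and below: "\<And>c. c < s \<Longrightarrow> real c / m \<le> \<tau> - d"
  shows "(1 - exp (- 2 * real m * d\<^sup>2)) * measure \<mu> {\<tau><..}
    \<le> measure_pmf.prob (mixture_pmf \<mu> (\<lambda>x. binomial_pmf m (clamp01 x))) {c. s \<le> c}"
proof (rule prob_mixture_pmf_lower[OF \<mu>(1) measurable_pmf_binomial_clamp01])
  fix x assume "x \<in> {\<tau><..}"
  then have x: "\<tau> < clamp01 x"
    using \<tau> unfolding clamp01_def by auto
  interpret binomial_distribution m "clamp01 x"
    by standard (rule clamp01_in_unit)
  have "real c / m \<le> clamp01 x - d" if "c < s" for c
    using below[OF that] x by linarith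
  then have "measure_pmf.prob (binomial_pmf m (clamp01 x)) {c. \<not> s \<le> c}
      \<le> measure_pmf.prob (binomial_pmf m (clamp01 x)) {c. real c / m \<le> clamp01 x - d}"
    by (intro measure_pmf.finite_measure_mono) (auto simp: not_le)
  also have "\<dots> \<le> exp (- 2 * real m * d\<^sup>2)"
    using prob_le'[OF m d] by simp
  finally show "1 - exp (- 2 * real m * d\<^sup>2) \<le> measure_pmf.prob (binomial_pmf m (clamp01 x)) {c. s \<le> c}"
    using measure_pmf.prob_compl[of "{c. s \<le> c}" "binomial_pmf m (clamp01 x)"]
    by (simp add: Compl_eq_Diff_UNIV[symmetric] Collect_neg_eq)
qed (use \<mu> in auto)

lemma prob_mixture_binomial_at_least_upper:
  fixes \<tau> d :: real and m :: nat
  assumes m: "m > 0" and \<tau>: "0 \<le> \<tau>" and d: "0 \<le> d" and above: "\<And>c. s \<le> c \<Longrightarrow> \<tau> + d \<le> real c / m"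
  shows "measure_pmf.prob (mixture_pmf \<mu> (\<lambda>x. binomial_pmf m (clamp01 x))) {c. s \<le> c}
    \<le> measure \<mu> {\<tau><..} + exp (- 2 * real m * d\<^sup>2)"
proof (rule prob_mixture_pmf_upper[OF \<mu>(1) measurable_pmf_binomial_clamp01])
  fix x assume "x \<notin> {\<tau><..}"
  then have x: "clamp01 x \<le> \<tau>"
    using \<tau> unfolding clamp01_def by auto
  interpret binomial_distribution m "clamp01 x"
    by standard (rule clamp01_in_unit)
  have "clamp01 x + d \<le> real c / m" if "s \<le> c" for c
    using above[OF that] x by linarith
  then have "measure_pmf.prob (binomial_pmf m (clamp01 x)) {c. s \<le> c}
      \<le> measure_pmf.prob (binomial_pmf m (clamp01 x)) {c. clamp01 x + d \<le> real c / m}"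
    by (intro measure_pmf.finite_measure_mono) auto
  also have "\<dots> \<le> exp (- 2 * real m * d\<^sup>2)"
    using prob_ge'[OF m d] by simp
  finally show "measure_pmf.prob (binomial_pmf m (clamp01 x)) {c. s \<le> c} \<le> exp (- 2 * real m * d\<^sup>2)" .
qed (use \<mu> in auto)

end

lemma reservoir_prob_space: "reservoir \<mu> \<Longrightarrow> prob_space \<mu>"
  unfolding reservoir_def by simp

lemma sets_reservoir: "reservoir \<mu> \<Longrightarrow> sets \<mu> = sets borel"
  unfolding reservoir_def by simp

lemma measure_greaterThan_reservoir:
  assumes "reservoir \<mu>"
  shows "measure \<mu> {t<..} = 1 - G \<mu> t"
proof -
  interpret prob_space \<mu> using assms by (rule reservoir_prob_space)
  have sets: "sets \<mu> = sets borel" using assms by (rule sets_reservoir)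
  then have space: "space \<mu> = UNIV" using sets_eq_imp_space_eq by fastforce
  have "prob {0..1} = 1" using assms unfolding reservoir_def measure_def by simp
  then have "AE x in \<mu>. x \<in> {0..1}" by (rule AE_prob_1)
  then have "measure \<mu> {..t} = G \<mu> t"
    unfolding G_def using sets by (intro measure_eq_AE) auto
  moreover have "{t<..} = space \<mu> - {..t}" using space by auto
  ultimately show ?thesis using prob_compl[of "{..t}"] sets by simp
qed

lemma G_mono:
  assumes "reservoir \<mu>" "x \<le> y"
  shows "G \<mu> x \<le> G \<mu> y"
proof -
  interpret prob_space \<mu> using assms(1) by (rule reservoir_prob_space)
  show ?thesis
    unfolding G_def using assms by (intro finite_measure_mono) (auto simp: sets_reservoir)
qed

lemma G_eq_1_reservoir: "reservoir \<mu> \<Longrightarrow> G \<mu> 1 = 1"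
  unfolding reservoir_def G_def measure_def by simp

lemma bdd_below_G_ge:
  assumes "0 < q"
  shows "bdd_below {\<tau>. q \<le> G \<mu> \<tau>}"
proof (rule bdd_belowI[where m = 0])
  fix \<tau> assume "\<tau> \<in> {\<tau>. q \<le> G \<mu> \<tau>}"
  then show "0 \<le> \<tau>"
    using assms by (cases "0 \<le> \<tau>") (auto simp: G_def)
qed

lemma G_inv_in_unit:
  assumes \<mu>: "reservoir \<mu>" and q: "0 < q" "q \<le> 1"
  shows "G_inv \<mu> q \<in> {0..1}"
proof -
  have one: "1 \<in> {\<tau>. q \<le> G \<mu> \<tau>}"
    using q G_eq_1_reservoir[OF \<mu>] by simp
  have "0 \<le> \<tau>" if "q \<le> G \<mu> \<tau>" for \<tau>
    using that q by (cases "0 \<le> \<tau>") (auto simp: G_def)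
  then have "0 \<le> G_inv \<mu> q"
    unfolding G_inv_def using one by (intro cInf_greatest) auto
  moreover have "G_inv \<mu> q \<le> 1"
    unfolding G_inv_def using one bdd_below_G_ge[OF q(1)] by (rule cInf_lower)
  ultimately show ?thesis by simp
qed

lemma G_less_below_G_inv:
  assumes q: "0 < q" and t: "t < G_inv \<mu> q"
  shows "G \<mu> t < q"
proof (rule ccontr)
  assume "\<not> G \<mu> t < q"
  then have "G_inv \<mu> q \<le> t"
    unfolding G_inv_def using bdd_below_G_ge[OF q] by (intro cInf_lower) auto
  then show False using t by simp
qed

lemma G_ge_above_G_inv:
  assumes \<mu>: "reservoir \<mu>" and q: "0 < q" "q \<le> 1" and t: "G_inv \<mu> q < t"
  shows "q \<le> G \<mu> t"
proof -
  have "1 \<in> {\<tau>. q \<le> G \<mu> \<tau>}"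
    using q G_eq_1_reservoir[OF \<mu>] by simp
  then obtain \<tau> where "q \<le> G \<mu> \<tau>" "\<tau> < t"
    using t bdd_below_G_ge[OF q(1)] unfolding G_inv_def by (subst (asm) cInf_less_iff) auto
  then show ?thesis using G_mono[OF \<mu>, of \<tau> t] by simp
qed

section \<open>The estimator\<close>

definition estimator_alg :: "nat \<Rightarrow> nat \<Rightarrow> nat \<Rightarrow> nat \<Rightarrow> bandit_alg" where
  "estimator_alg m k r j = oblivious_alg (repeat_arms m (r * k))
     (\<lambda>h. real (median_threshold m k r j (success_counts m (r * k) h)) / real m)"

lemma valid_alg_estimator_alg: "real (r * k * m) \<le> B \<Longrightarrow> valid_alg B (estimator_alg m k r j)"
  unfolding estimator_alg_def
  by (rule valid_alg_oblivious_alg) (auto simp: length_repeat_arms median_threshold_le divide_le_eq_1 algebra_simps)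

lemma success_prob_estimator_alg:
  assumes \<mu>: "reservoir \<mu>" and n: "r * k * m \<le> n"
  shows "success_prob \<mu> (estimator_alg m k r j) n I =
    ennreal (measure_pmf.prob (replicate_pmf (r * k) (mixture_pmf \<mu> (\<lambda>x. binomial_pmf m (clamp01 x))))
      {xs. real (median_threshold m k r j xs) / real m \<in> I})"
proof -
  let ?est = "\<lambda>xs. real (median_threshold m k r j xs) / real m"
  let ?counts = "\<lambda>p. indep_pmfs (map (\<lambda>i. binomial_pmf m (clamp01 (p i))) [0..<r * k])"
  have "alg_output (estimator_alg m k r j) p n []
      = map_pmf (\<lambda>t. ?est (success_counts m (r * k) t)) (indep_pmfs (map (pull p) (repeat_arms m (r * k))))" for p
    using alg_output_oblivious_alg[of "repeat_arms m (r * k)" "[]" n] n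
    by (simp add: estimator_alg_def length_repeat_arms)
  also have "\<dots> p = map_pmf ?est (?counts p)" for p
    by (simp flip: success_counts_repeat_arms add: pmf.map_comp o_def)
  finally have "success_prob \<mu> (estimator_alg m k r j) n I
      = (\<integral>\<^sup>+ p. emeasure (?counts p) (?est -` I) \<partial>PiM UNIV (\<lambda>_. \<mu>))"
    unfolding success_prob_def by (simp add: measure_pmf.emeasure_eq_measure)
  also have "\<dots> = emeasure (replicate_pmf (r * k) (mixture_pmf \<mu> (\<lambda>x. binomial_pmf m (clamp01 x)))) (?est -` I)"
    by (intro nn_integral_PiM_emeasure_indep_pmfs measurable_pmf_binomial_clamp01
        reservoir_prob_space sets_reservoir \<mu>)
  finally show ?thesis
    by (simp add: measure_pmf.emeasure_eq_measure vimage_def)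
qed

lemma prob_success_count_ge_lower:
  fixes \<eta>1 \<eta>2 \<epsilon> :: real and m :: nat
  assumes \<mu>: "reservoir \<mu>" and \<eta>: "0 < \<eta>2" "\<eta>2 \<le> \<eta>1" "\<eta>1 < 1" and \<epsilon>: "0 < \<epsilon>"
    and m: "m > 0" "exp (- 2 * real m * (\<epsilon>/6)\<^sup>2) \<le> \<eta>2/8"
  shows "\<eta>1 - \<eta>2/8 \<le> measure_pmf.prob (mixture_pmf \<mu> (\<lambda>x. binomial_pmf m (clamp01 x)))
           {c. nat \<lceil>m * (G_inv \<mu> (1 - \<eta>1) - \<epsilon>/3)\<rceil> \<le> c}"
proof -
  define a where "a = G_inv \<mu> (1 - \<eta>1)"
  have a: "a \<in> {0..1}"
    unfolding a_def using G_inv_in_unit[OF \<mu>] \<eta> by simp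
  have "G \<mu> (a - \<epsilon>/6) < 1 - \<eta>1"
    unfolding a_def using \<eta> \<epsilon> by (intro G_less_below_G_inv) auto
  then have mass: "\<eta>1 \<le> measure \<mu> {a - \<epsilon>/6<..}"
    using measure_greaterThan_reservoir[OF \<mu>] by simp
  have "(1 - exp (- 2 * real m * (\<epsilon>/6)\<^sup>2)) * measure \<mu> {a - \<epsilon>/6<..}
      \<le> measure_pmf.prob (mixture_pmf \<mu> (\<lambda>x. binomial_pmf m (clamp01 x))) {c. nat \<lceil>m * (a - \<epsilon>/3)\<rceil> \<le> c}"
  proof (rule prob_mixture_binomial_at_least_lower[OF reservoir_prob_space[OF \<mu>] sets_reservoir[OF \<mu>] m(1)])
    fix c assume "c < nat \<lceil>m * (a - \<epsilon>/3)\<rceil>"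
    then have "real c < m * (a - \<epsilon>/3)"
      by (simp add: zless_nat_eq_int_zless less_ceiling_iff)
    then show "real c / m \<le> a - \<epsilon>/6 - \<epsilon>/6"
      using m(1) by (simp add: field_simps)
  qed (use a \<epsilon> in auto)
  moreover have "\<eta>1 - \<eta>2/8 \<le> (1 - exp (- 2 * real m * (\<epsilon>/6)\<^sup>2)) * measure \<mu> {a - \<epsilon>/6<..}"
  proof -
    have "\<eta>1 - \<eta>2/8 \<le> (1 - \<eta>2/8) * \<eta>1"
      using \<eta> mult_left_mono[of \<eta>1 1 "\<eta>2/8"] by (simp add: algebra_simps)
    also have "\<dots> \<le> (1 - exp (- 2 * real m * (\<epsilon>/6)\<^sup>2)) * measure \<mu> {a - \<epsilon>/6<..}"
      using m(2) mass \<eta> by (intro mult_mono) auto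
    finally show ?thesis .
  qed
  ultimately show ?thesis unfolding a_def by linarith
qed

lemma prob_success_count_ge_upper:
  fixes \<eta>1 \<eta>2 \<epsilon> :: real and m :: nat
  assumes \<mu>: "reservoir \<mu>" and \<eta>: "0 < \<eta>2" "\<eta>2 \<le> \<eta>1" "\<eta>1 < 1" and \<epsilon>: "0 < \<epsilon>"
    and m: "m > 0" "exp (- 2 * real m * (\<epsilon>/6)\<^sup>2) \<le> \<eta>2/8"
  shows "measure_pmf.prob (mixture_pmf \<mu> (\<lambda>x. binomial_pmf m (clamp01 x)))
           {c. nat \<lfloor>m * (G_inv \<mu> (1 - \<eta>1 + \<eta>2) + \<epsilon>/3)\<rfloor> + 1 \<le> c} \<le> \<eta>1 - 7 * \<eta>2/8"
proof -
  define b where "b = G_inv \<mu> (1 - \<eta>1 + \<eta>2)"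
  have b: "b \<in> {0..1}"
    unfolding b_def using G_inv_in_unit[OF \<mu>] \<eta> by simp
  have "1 - \<eta>1 + \<eta>2 \<le> G \<mu> (b + \<epsilon>/6)"
    unfolding b_def using \<eta> \<epsilon> by (intro G_ge_above_G_inv[OF \<mu>]) auto
  then have mass: "measure \<mu> {b + \<epsilon>/6<..} \<le> \<eta>1 - \<eta>2"
    using measure_greaterThan_reservoir[OF \<mu>] by simp
  have "measure_pmf.prob (mixture_pmf \<mu> (\<lambda>x. binomial_pmf m (clamp01 x))) {c. nat \<lfloor>m * (b + \<epsilon>/3)\<rfloor> + 1 \<le> c}
      \<le> measure \<mu> {b + \<epsilon>/6<..} + exp (- 2 * real m * (\<epsilon>/6)\<^sup>2)"
  proof (rule prob_mixture_binomial_at_least_upper[OF reservoir_prob_space[OF \<mu>] sets_reservoir[OF \<mu>] m(1)])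
    fix c assume "nat \<lfloor>m * (b + \<epsilon>/3)\<rfloor> + 1 \<le> c"
    then have "m * (b + \<epsilon>/3) \<le> real c"
      by linarith
    then show "b + \<epsilon>/6 + \<epsilon>/6 \<le> real c / m"
      using m(1) by (simp add: field_simps)
  qed (use b \<epsilon> in auto)
  then show ?thesis
    using mass m(2) unfolding b_def by linarith
qed

lemma divide_in_atLeastAtMost_ceiling_floor:
  fixes a b :: real and m s :: nat
  assumes "m > 0" "0 \<le> b" "nat \<lceil>m * a\<rceil> \<le> s" "s < nat \<lfloor>m * b\<rfloor> + 1"
  shows "real s / m \<in> {a..b}"
proof -
  have "0 \<le> m * b"
    using assms(2) by simp
  moreover have "real s \<le> real (nat \<lfloor>m * b\<rfloor>)"
    using assms(4) by simp
  ultimately have "real s \<le> m * b"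
    using of_nat_floor[of "m * b"] by linarith
  moreover have "m * a \<le> real s"
    using assms(3) by linarith
  ultimately show ?thesis
    using assms(1) by (simp add: field_simps)
qed

lemma success_prob_estimator_alg_ge:
  fixes \<eta>1 \<eta>2 \<epsilon> \<delta> :: real and m k r j n :: nat
  assumes \<mu>: "reservoir \<mu>" and \<eta>: "0 < \<eta>2" "\<eta>2 \<le> \<eta>1" "\<eta>1 < 1" and \<epsilon>: "0 < \<epsilon>"
    and m: "m > 0" "exp (- 2 * real m * (\<epsilon>/6)\<^sup>2) \<le> \<eta>2/8"
    and k: "128 * \<eta>1 / \<eta>2\<^sup>2 \<le> k" and j: "k * (\<eta>1 - \<eta>2/2) \<le> j" "real j - 1 < k * (\<eta>1 - \<eta>2/2)"
    and r: "r > 0" "exp (- 9 * real r / 32) \<le> \<delta>/4"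
    and n: "r * k * m \<le> n"
  shows "ennreal (1 - \<delta>/2) \<le> success_prob \<mu> (estimator_alg m k r j) n
           {G_inv \<mu> (1 - \<eta>1) - \<epsilon>/3 .. G_inv \<mu> (1 - \<eta>1 + \<eta>2) + \<epsilon>/3}"
proof -
  define a b where "a = G_inv \<mu> (1 - \<eta>1)" and "b = G_inv \<mu> (1 - \<eta>1 + \<eta>2)"
  define s_lo s_hi where "s_lo = nat \<lceil>m * (a - \<epsilon>/3)\<rceil>" and "s_hi = nat \<lfloor>m * (b + \<epsilon>/3)\<rfloor> + 1"
  define \<nu> where "\<nu> = mixture_pmf \<mu> (\<lambda>x. binomial_pmf m (clamp01 x))"
  have "7/8 \<le> measure_pmf.prob (binomial_pmf k (measure_pmf.prob \<nu> {c. s_lo \<le> c})) {c. j \<le> c}"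
    using prob_success_count_ge_lower[OF \<mu> \<eta> \<epsilon> m] \<eta> k j
    unfolding \<nu>_def s_lo_def a_def by (intro binomial_pmf_prob_at_least_high) auto
  moreover have "measure_pmf.prob (binomial_pmf k (measure_pmf.prob \<nu> {c. s_hi \<le> c})) {c. j \<le> c} \<le> 1/8"
    using prob_success_count_ge_upper[OF \<mu> \<eta> \<epsilon> m] \<eta> k j
    unfolding \<nu>_def s_hi_def b_def by (intro binomial_pmf_prob_at_least_low) auto
  moreover have "s_lo \<le> m"
    using G_inv_in_unit[OF \<mu>, of "1 - \<eta>1"] \<eta> \<epsilon> mult_left_mono[of "a - \<epsilon>/3" 1 "real m"]
    unfolding s_lo_def a_def by (simp add: ceiling_le_iff nat_le_iff)
  moreover have "b \<in> {0..1}"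
    unfolding b_def using G_inv_in_unit[OF \<mu>] \<eta> by simp
  then have interval: "real (median_threshold m k r j xs) / m \<in> {a - \<epsilon>/3 .. b + \<epsilon>/3}"
    if "s_lo \<le> median_threshold m k r j xs" "median_threshold m k r j xs < s_hi" for xs
    using that m(1) \<epsilon> unfolding s_lo_def s_hi_def by (intro divide_in_atLeastAtMost_ceiling_floor) auto
  ultimately have "1 - 2 * exp (- 9 * real r / 32)
      \<le> measure_pmf.prob (replicate_pmf (r * k) \<nu>)
            {xs. s_lo \<le> median_threshold m k r j xs \<and> median_threshold m k r j xs < s_hi}"
    using r by (intro median_threshold_concentration) auto
  also have "\<dots> \<le> measure_pmf.prob (replicate_pmf (r * k) \<nu>)
            {xs. real (median_threshold m k r j xs) / m \<in> {a - \<epsilon>/3 .. b + \<epsilon>/3}}"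
    using interval by (intro measure_pmf.finite_measure_mono) auto
  finally show ?thesis
    using success_prob_estimator_alg[OF \<mu> n] r(2) unfolding \<nu>_def a_def b_def
    by (simp add: ennreal_leI)
qed

lemma real_nat_ceiling_less: "0 \<le> x \<Longrightarrow> real (nat \<lceil>x\<rceil>) < x + 1"
  using ceiling_correct[of x] by linarith

lemma exp_neg_nat_ceiling_le:
  assumes "0 < c" "0 < y"
  shows "exp (- (c * real (nat \<lceil>ln y / c\<rceil>))) \<le> 1 / y"
proof -
  have "ln y \<le> c * real (nat \<lceil>ln y / c\<rceil>)"
    using real_nat_ceiling_ge[of "ln y / c"] assms(1) by (simp add: field_simps)
  then have "exp (- (c * real (nat \<lceil>ln y / c\<rceil>))) \<le> exp (- ln y)"
    by simp
  also have "exp (- ln y) = 1 / y"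
    using assms(2) by (simp add: exp_minus inverse_eq_divide)
  finally show ?thesis .
qed

lemma ln_inverse_ge_ln2: "0 < x \<Longrightarrow> x \<le> 1/2 \<Longrightarrow> ln 2 \<le> ln (1 / x :: real)"
  by (subst ln_le_cancel_iff) (auto simp: field_simps)

lemma pulls_per_arm_le:
  assumes \<eta>: "0 < \<eta>2" "\<eta>2 \<le> 1/2" and \<epsilon>: "0 < \<epsilon>" "\<epsilon> \<le> 1/2"
  shows "real (nat \<lceil>ln (8/\<eta>2) / (\<epsilon>\<^sup>2/18)\<rceil>) \<le> 73 * ln (1/\<eta>2) / \<epsilon>\<^sup>2"
proof -
  have L: "ln 2 \<le> ln (1/\<eta>2)" and ln2: "2/3 \<le> ln (2::real)"
    using ln_inverse_ge_ln2 \<eta> ln2_ge_two_thirds by auto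
  have "ln (8/\<eta>2) = 3 * ln 2 + ln (1/\<eta>2)"
    using \<eta> ln_realpow[of 2 3] by (simp add: ln_div)
  moreover have "\<epsilon>\<^sup>2 \<le> 1/4"
    using \<epsilon> power_mono[of \<epsilon> "1/2" 2] by (simp add: power2_eq_square)
  ultimately have "18 * ln (8/\<eta>2) + \<epsilon>\<^sup>2 \<le> 73 * ln (1/\<eta>2)"
    using L ln2 by linarith
  have "real (nat \<lceil>ln (8/\<eta>2) / (\<epsilon>\<^sup>2/18)\<rceil>) \<le> ln (8/\<eta>2) / (\<epsilon>\<^sup>2/18) + 1"
    using \<open>ln (8/\<eta>2) = _\<close> L ln2 by (intro less_imp_le[OF real_nat_ceiling_less]) simp
  also have "\<dots> = (18 * ln (8/\<eta>2) + \<epsilon>\<^sup>2) / \<epsilon>\<^sup>2"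
    using \<epsilon> by (simp add: field_simps)
  also have "\<dots> \<le> 73 * ln (1/\<eta>2) / \<epsilon>\<^sup>2"
    using \<open>18 * ln (8/\<eta>2) + \<epsilon>\<^sup>2 \<le> _\<close> by (intro divide_right_mono) auto
  finally show ?thesis .
qed

lemma group_size_le:
  assumes "0 < \<eta>2" "\<eta>2 \<le> \<eta>1" "\<eta>2 \<le> 1"
  shows "real (nat \<lceil>128 * \<eta>1 / \<eta>2\<^sup>2\<rceil>) \<le> 129 * \<eta>1 / \<eta>2\<^sup>2"
proof -
  have "real (nat \<lceil>128 * \<eta>1 / \<eta>2\<^sup>2\<rceil>) \<le> 128 * \<eta>1 / \<eta>2\<^sup>2 + 1"
    using assms by (intro less_imp_le[OF real_nat_ceiling_less]) simp
  also have "\<dots> \<le> 129 * \<eta>1 / \<eta>2\<^sup>2"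
    using assms mult_mono[of \<eta>2 1 \<eta>2 \<eta>1] by (simp add: field_simps power2_eq_square)
  finally show ?thesis .
qed

lemma groups_le:
  assumes "0 < \<delta>" "\<delta> \<le> 1/2"
  shows "real (nat \<lceil>ln (4/\<delta>) / (9/32)\<rceil>) \<le> 13 * ln (1/\<delta>)"
proof -
  have D: "ln 2 \<le> ln (1/\<delta>)" and ln2: "2/3 \<le> ln (2::real)"
    using ln_inverse_ge_ln2 assms ln2_ge_two_thirds by auto
  have ln4: "ln (4/\<delta>) = 2 * ln 2 + ln (1/\<delta>)"
    using assms ln_realpow[of 2 2] by (simp add: ln_div)
  have "real (nat \<lceil>ln (4/\<delta>) / (9/32)\<rceil>) \<le> ln (4/\<delta>) / (9/32) + 1"
    using ln4 D ln2 by (intro less_imp_le[OF real_nat_ceiling_less]) simp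
  also have "\<dots> \<le> 13 * ln (1/\<delta>)"
    using ln4 D ln2 by (simp add: field_simps; linarith)
  finally show ?thesis .
qed

lemma sample_size_le:
  fixes \<eta>1 \<eta>2 \<epsilon> \<delta> :: real
  assumes \<eta>: "0 < \<eta>2" "\<eta>2 \<le> \<eta>1" "\<eta>2 \<le> 1/2" and \<epsilon>: "0 < \<epsilon>" "\<epsilon> \<le> 1/2" and \<delta>: "0 < \<delta>" "\<delta> \<le> 1/2"
  shows "real (nat \<lceil>ln (4/\<delta>) / (9/32)\<rceil> * nat \<lceil>128 * \<eta>1 / \<eta>2\<^sup>2\<rceil> * nat \<lceil>ln (8/\<eta>2) / (\<epsilon>\<^sup>2/18)\<rceil>)
    \<le> 200000 * (\<eta>1 * ln (1/\<eta>2) * ln (1/\<delta>)) / (\<eta>2\<^sup>2 * \<epsilon>\<^sup>2)"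
proof -
  have L: "0 \<le> ln (1/\<eta>2)" and D: "0 \<le> ln (1/\<delta>)"
    using ln_inverse_ge_ln2[of \<eta>2] ln_inverse_ge_ln2[of \<delta>] \<eta> \<delta> by auto
  have "real (nat \<lceil>ln (4/\<delta>) / (9/32)\<rceil> * nat \<lceil>128 * \<eta>1 / \<eta>2\<^sup>2\<rceil> * nat \<lceil>ln (8/\<eta>2) / (\<epsilon>\<^sup>2/18)\<rceil>)
      \<le> (13 * ln (1/\<delta>)) * (129 * \<eta>1 / \<eta>2\<^sup>2) * (73 * ln (1/\<eta>2) / \<epsilon>\<^sup>2)"
    unfolding of_nat_mult using groups_le[OF \<delta>] group_size_le[of \<eta>2 \<eta>1] pulls_per_arm_le[OF \<eta>(1,3) \<epsilon>] D \<eta>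
    by (intro mult_mono mult_nonneg_nonneg of_nat_0_le_iff) auto
  \<comment> \<open>\<open>13 * 129 * 73 = 122421\<close>\<close>
  also have "\<dots> \<le> 200000 * (\<eta>1 * ln (1/\<eta>2) * ln (1/\<delta>)) / (\<eta>2\<^sup>2 * \<epsilon>\<^sup>2)"
    using \<eta> \<epsilon> L D by (simp add: field_simps)
  finally show ?thesis .
qed

lemma estimator_guarantee:
  fixes \<eta>1 \<eta>2 \<epsilon> \<delta> :: real
  assumes \<eta>: "0 < \<eta>2" "\<eta>2 \<le> \<eta>1" "\<eta>1 \<le> 1/2" and \<epsilon>: "0 < \<epsilon>" "\<epsilon> \<le> 1/2"
    and \<delta>: "0 < \<delta>" "\<delta> \<le> 1/2"
  defines "B \<equiv> 200000 * (\<eta>1 * ln (1 / \<eta>2) * ln (1 / \<delta>)) / (\<eta>2\<^sup>2 * \<epsilon>\<^sup>2)"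
  shows "\<exists>A. valid_alg B A \<and> (\<forall>\<mu>. reservoir \<mu> \<longrightarrow> ennreal (1 - \<delta> / 2) \<le>
    success_prob \<mu> A (nat \<lceil>B\<rceil>) {G_inv \<mu> (1 - \<eta>1) - \<epsilon> / 3 .. G_inv \<mu> (1 - \<eta>1 + \<eta>2) + \<epsilon> / 3})"
proof -
  define m where "m = nat \<lceil>ln (8/\<eta>2) / (\<epsilon>\<^sup>2/18)\<rceil>"
  define k where "k = nat \<lceil>128 * \<eta>1 / \<eta>2\<^sup>2\<rceil>"
  define r where "r = nat \<lceil>ln (4/\<delta>) / (9/32)\<rceil>"
  define j where "j = nat \<lceil>k * (\<eta>1 - \<eta>2/2)\<rceil>"
  have size: "real (r * k * m) \<le> B"
    unfolding B_def r_def k_def m_def using \<eta> \<epsilon> \<delta> by (intro sample_size_le) auto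
  then have "real (r * k * m) \<le> real (nat \<lceil>B\<rceil>)"
    using real_nat_ceiling_ge[of B] by linarith
  then have n: "r * k * m \<le> nat \<lceil>B\<rceil>"
    by (simp only: of_nat_le_iff)
  have "0 < ln (8/\<eta>2)" "0 < ln (4/\<delta>)"
    using \<eta> \<delta> by (simp_all add: field_simps)
  then have "m > 0" "r > 0"
    using \<epsilon> unfolding m_def r_def by (simp_all add: less_ceiling_iff)
  moreover have "exp (- 2 * real m * (\<epsilon>/6)\<^sup>2) \<le> \<eta>2/8"
    using exp_neg_nat_ceiling_le[of "\<epsilon>\<^sup>2/18" "8/\<eta>2"] \<eta> \<epsilon> unfolding m_def
    by (simp add: power_divide algebra_simps)
  moreover have "exp (- 9 * real r / 32) \<le> \<delta>/4"
    using exp_neg_nat_ceiling_le[of "9/32" "4/\<delta>"] \<delta> unfolding r_def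
    by (simp add: algebra_simps)
  moreover have "128 * \<eta>1 / \<eta>2\<^sup>2 \<le> k"
    unfolding k_def by (rule real_nat_ceiling_ge)
  moreover have "k * (\<eta>1 - \<eta>2/2) \<le> j" "real j - 1 < k * (\<eta>1 - \<eta>2/2)"
    using real_nat_ceiling_ge real_nat_ceiling_less[of "k * (\<eta>1 - \<eta>2/2)"] \<eta>
    unfolding j_def by auto
  ultimately show ?thesis
    using \<eta> \<epsilon> size n
    by (intro exI[of _ "estimator_alg m k r j"] conjI allI impI valid_alg_estimator_alg
        success_prob_estimator_alg_ge) auto
qed

theorem proposition1p4:
  "\<exists>C::real. C > 0 \<and>
     (\<forall>\<eta>1 \<eta>2 \<epsilon> \<delta> :: real.
        \<eta>1 \<in> {0<..1/2} \<and> \<eta>2 \<in> {0<..1/2} \<and> \<epsilon> \<in> {0<..1/2} \<and> \<delta> \<in> {0<..1/2} \<and> \<eta>2 \<le> \<eta>1 \<longrightarrow>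
        (let B = C * (\<eta>1 * ln (1 / \<eta>2) * ln (1 / \<delta>)) / (\<eta>2\<^sup>2 * \<epsilon>\<^sup>2) in
         \<exists>A. valid_alg B A \<and>
           (\<forall>\<mu>. reservoir \<mu> \<longrightarrow>
              success_prob \<mu> A (nat \<lceil>B\<rceil>)
                {G_inv \<mu> (1 - \<eta>1) - \<epsilon> / 3 .. G_inv \<mu> (1 - \<eta>1 + \<eta>2) + \<epsilon> / 3}
              \<ge> ennreal (1 - \<delta> / 2))))"
  unfolding Let_def by (intro exI[of _ "200000::real"] conjI allI impI estimator_guarantee) auto

end
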